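(* Let $n\ge 2$ and let $S$ be a set of vertices of the hypercube $Q_n$ such that the induced subgraph $Q_n[S]$ has maximum degree at most one. Then, identifying vertices of $Q_n$ with subsets of $[n]$, the collection $V(Q_n)\setminus S$ is the collection of feasible sets of a delta-matroid with ground set $[n]$.
   Context: The $n$-dimensional hypercube $Q_n$ has vertex set $\{0,1\}^n$, two vertices adjacent if they differ in exactly one coordinate; each vertex is identified with the subset of $[n]=\{1,\dots,n\}$ of which it is the indicator vector. A delta-matroid $(E,\mathcal F)$ consists of a finite ground set $E$ and a non-empty collection $\mathcal F$ of subsets of $E$ (the feasible sets) satisfying the symmetric exchange axiom: for all $X,Y\in\mathcal F$ and every $e\in X\triangle Y$ there exists $f\in X\triangle Y$ (possibly $f=e$) with $X\triangle\{e,f\}\in\mathcal F$. *)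

theory Defs
  imports Main
begin

definition symdiff :: "'a set \<Rightarrow> 'a set \<Rightarrow> 'a set" (infixl "\<triangle>" 70) where
  "A \<triangle> B = (A - B) \<union> (B - A)"

definition delta_matroid :: "'a set \<Rightarrow> 'a set set \<Rightarrow> bool" where
  "delta_matroid E F \<longleftrightarrow> finite E \<and> F \<noteq> {} \<and> (\<forall>X\<in>F. X \<subseteq> E) \<and>
     (\<forall>X\<in>F. \<forall>Y\<in>F. \<forall>e\<in>X \<triangle> Y. \<exists>f\<in>X \<triangle> Y. X \<triangle> {e, f} \<in> F)"

definition hypercube_vertices :: "nat \<Rightarrow> nat set set" where
  "hypercube_vertices n = Pow {1..n}"

definition hypercube_adj :: "nat set \<Rightarrow> nat set \<Rightarrow> bool" where
  "hypercube_adj X Y \<longleftrightarrow> card (X \<triangle> Y) = 1"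

definition induced_degree :: "nat set set \<Rightarrow> nat set \<Rightarrow> nat" where
  "induced_degree S v = card {w \<in> S. hypercube_adj v w}"

end

theory Submission
  imports Defs
begin

text \<open>Let \<open>X, Y\<close> be feasible and \<open>e \<in> X \<triangle> Y\<close>. If no exchange partner \<open>f\<close> works,
  then \<open>X \<triangle> {e}\<close> lies in \<open>S\<close> together with all its neighbours \<open>X \<triangle> {e, f}\<close>,
  \<open>f \<in> X \<triangle> Y - {e}\<close>. Since vertices of \<open>S\<close> have at most one neighbour in \<open>S\<close>, this
  forces \<open>X \<triangle> Y = {e, f}\<close> for a single \<open>f\<close>, whence \<open>Y = X \<triangle> {e, f} \<in> S\<close>, a
  contradiction. Some vertex lies outside \<open>S\<close> because \<open>n \<ge> 2\<close>: otherwise \<open>{}\<close> would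
  have the two neighbours \<open>{1}, {2}\<close> in \<open>S\<close>.\<close>

lemma symdiff_cancel_left: "A \<triangle> (A \<triangle> B) = B"
  by (auto simp: symdiff_def)

lemma symdiff_singleton_eq_iff: "A \<triangle> {a} = A \<triangle> {b} \<longleftrightarrow> a = b"
  by (auto simp: symdiff_def)

lemma symdiff_insert_pair: "a \<noteq> b \<Longrightarrow> A \<triangle> {a, b} = (A \<triangle> {a}) \<triangle> {b}"
  by (auto simp: symdiff_def)

lemma symdiff_subset: "A \<subseteq> E \<Longrightarrow> B \<subseteq> E \<Longrightarrow> A \<triangle> B \<subseteq> E"
  by (auto simp: symdiff_def)

lemma hypercube_adj_symdiff_singleton: "hypercube_adj A (A \<triangle> {a})"
  unfolding hypercube_adj_def by (simp add: symdiff_cancel_left)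

lemma induced_degree_le_one_unique_neighbour:
  assumes "finite S" and "induced_degree S v \<le> 1"
    and "v \<triangle> {a} \<in> S" and "v \<triangle> {b} \<in> S"
  shows "a = b"
proof (rule ccontr)
  assume "a \<noteq> b"
  then have "2 = card {v \<triangle> {a}, v \<triangle> {b}}"
    by (simp add: symdiff_singleton_eq_iff)
  also have "\<dots> \<le> card {w \<in> S. hypercube_adj v w}"
    using assms(1,3,4) by (intro card_mono) (auto simp: hypercube_adj_symdiff_singleton)
  finally show False
    using assms(2) unfolding induced_degree_def by simp
qed

lemma symmetric_exchange_Pow_diff:
  assumes unique: "\<And>v a b. v \<in> S \<Longrightarrow> v \<triangle> {a} \<in> S \<Longrightarrow> v \<triangle> {b} \<in> S \<Longrightarrow> a = b"
    and "X \<subseteq> E" "Y \<subseteq> E" "Y \<notin> S" "e \<in> X \<triangle> Y"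
  shows "\<exists>f\<in>X \<triangle> Y. X \<triangle> {e, f} \<in> Pow E - S"
proof (rule ccontr)
  assume "\<not> ?thesis"
  moreover have "X \<triangle> {e, f} \<subseteq> E" if "f \<in> X \<triangle> Y" for f
    using assms(2-5) that by (intro symdiff_subset) (auto simp: symdiff_def)
  ultimately have in_S: "X \<triangle> {e, f} \<in> S" if "f \<in> X \<triangle> Y" for f
    using that by blast
  have Xe: "X \<triangle> {e} \<in> S"
    using in_S[OF \<open>e \<in> X \<triangle> Y\<close>] by simp
  have partner_unique: "f = g" if "f \<in> X \<triangle> Y - {e}" "g \<in> X \<triangle> Y - {e}" for f g
    using that unique[OF Xe, of f g] in_S[of f] in_S[of g] symdiff_insert_pair[of e f X]
      symdiff_insert_pair[of e g X] by auto
  obtain f where "X \<triangle> Y = {e, f}"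
  proof (cases "X \<triangle> Y - {e} = {}")
    case True
    with \<open>e \<in> X \<triangle> Y\<close> have "X \<triangle> Y = {e, e}" by auto
    then show ?thesis by (rule that)
  next
    case False
    then obtain f where "f \<in> X \<triangle> Y - {e}" by blast
    with partner_unique \<open>e \<in> X \<triangle> Y\<close> have "X \<triangle> Y = {e, f}" by blast
    then show ?thesis by (rule that)
  qed
  then have "Y = X \<triangle> {e, f}"
    using symdiff_cancel_left[of X Y] by simp
  then show False
    using in_S \<open>X \<triangle> Y = {e, f}\<close> \<open>Y \<notin> S\<close> by blast
qed

lemma Pow_diff_nonempty:
  assumes unique: "\<And>v a b. v \<in> S \<Longrightarrow> v \<triangle> {a} \<in> S \<Longrightarrow> v \<triangle> {b} \<in> S \<Longrightarrow> a = b"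
    and "a \<in> E" "b \<in> E" "a \<noteq> b"
  shows "Pow E - S \<noteq> {}"
proof
  assume "Pow E - S = {}"
  then have "{} \<in> S" "{} \<triangle> {a} \<in> S" "{} \<triangle> {b} \<in> S"
    using assms(2,3) by (auto simp: symdiff_def)
  then show False
    using unique \<open>a \<noteq> b\<close> by blast
qed

lemma delta_matroid_Pow_diff:
  assumes "finite E" and "2 \<le> card E"
    and unique: "\<And>v a b. v \<in> S \<Longrightarrow> v \<triangle> {a} \<in> S \<Longrightarrow> v \<triangle> {b} \<in> S \<Longrightarrow> a = b"
  shows "delta_matroid E (Pow E - S)"
proof -
  have "\<not> card E \<le> Suc 0"
    using assms(2) by simp
  then obtain a b where "a \<in> E" "b \<in> E" "a \<noteq> b"
    unfolding card_le_Suc0_iff_eq[OF assms(1)] by blast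
  show ?thesis
    unfolding delta_matroid_def
  proof (intro conjI ballI)
    show "Pow E - S \<noteq> {}"
      using unique \<open>a \<in> E\<close> \<open>b \<in> E\<close> \<open>a \<noteq> b\<close> by (rule Pow_diff_nonempty)
  next
    fix X Y e
    assume "X \<in> Pow E - S" "Y \<in> Pow E - S" "e \<in> X \<triangle> Y"
    then show "\<exists>f\<in>X \<triangle> Y. X \<triangle> {e, f} \<in> Pow E - S"
      using unique by (intro symmetric_exchange_Pow_diff) auto
  qed (use assms(1) in auto)
qed

theorem lemma3p4:
  fixes n :: nat and S :: "nat set set"
  assumes "n \<ge> 2"
    and "S \<subseteq> hypercube_vertices n"
    and "\<forall>v\<in>S. induced_degree S v \<le> 1"
  shows "delta_matroid {1..n} (hypercube_vertices n - S)"
proof -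
  have "finite S"
    using assms(2) unfolding hypercube_vertices_def by (simp add: finite_subset)
  then have "a = b" if "v \<in> S" "v \<triangle> {a} \<in> S" "v \<triangle> {b} \<in> S" for v a b
    using induced_degree_le_one_unique_neighbour assms(3) that by blast
  then show ?thesis
    unfolding hypercube_vertices_def using assms(1) by (intro delta_matroid_Pow_diff) simp_all
qed

end
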